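(* Let $K$ be a field, $\mathcal A$ a $K$-algebra, $\vartheta$ any one of the four types (left, right, pre-two-sided, two-sided), and $M$ a $\vartheta$-Mathieu subspace of $\mathcal A$. Let $a\in\mathcal A$ be algebraic over $K$ with $a^m\in M$ for all $m\ge 1$, and let $k\ge 0$ be the multiplicity of $0\in K$ as a root of the minimal polynomial of $a$ over $K$. Then $(a^k)_\vartheta\subseteq M$. In particular, for $\vartheta\neq$ pre-two-sided, the $\vartheta$-ideal of $\mathcal A$ generated by $a^k$ is contained in $M$.
   Context: All algebras are associative and unital. Let $M$ be a $K$-subspace of $\mathcal A$. $M$ is a left (resp. right) Mathieu subspace if whenever $a\in\mathcal A$ satisfies $a^m\in M$ for all $m\ge1$, then for every $b\in\mathcal A$ there is $N$ with $ba^m\in M$ (resp. $a^mb\in M$) for all $m\ge N$. $M$ is a pre-two-sided Mathieu subspace if it is both a left and a right Mathieu subspace. $M$ is a two-sided Mathieu subspace if whenever $a^m\in M$ for all $m\ge1$, then for all $b,c\in\mathcal A$ there is $N$ with $ba^mc\in M$ for all $m\ge N$. A $\vartheta$-Mathieu subspace is one of the type $\vartheta$. A $\vartheta$-ideal means a left ideal if $\vartheta$ = left, a right ideal if $\vartheta$ = right, and a two-sided ideal if $\vartheta$ is pre-two-sided or two-sided. For $x\in\mathcal A$: $(x)_\vartheta$ is the left ideal $\mathcal Ax$ if $\vartheta$ = left, the right ideal $x\mathcal A$ if $\vartheta$ = right, the two-sided ideal generated by $x$ if $\vartheta$ = two-sided, and $x\mathcal A+\mathcal Ax$ if $\vartheta$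 = pre-two-sided. *)

theory Defs
  imports Main "HOL-Computational_Algebra.Polynomial"
begin

definition K_algebra :: "('k::field \<Rightarrow> 'a::ring_1 \<Rightarrow> 'a) \<Rightarrow> bool" where
  "K_algebra scale \<longleftrightarrow> vector_space scale \<and>
     (\<forall>c x y. scale c (x * y) = scale c x * y \<and> scale c (x * y) = x * scale c y)"

definition aeval :: "('k::field \<Rightarrow> 'a::ring_1 \<Rightarrow> 'a) \<Rightarrow> 'k poly \<Rightarrow> 'a \<Rightarrow> 'a" where
  "aeval scale p x = (\<Sum>i\<le>degree p. scale (coeff p i) (x ^ i))"

definition algebraic_el :: "('k::field \<Rightarrow> 'a::ring_1 \<Rightarrow> 'a) \<Rightarrow> 'a \<Rightarrow> bool" where
  "algebraic_el scale x \<longleftrightarrow> (\<exists>p. p \<noteq> 0 \<and> aeval scale p x = 0)"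

definition is_min_poly :: "('k::field \<Rightarrow> 'a::ring_1 \<Rightarrow> 'a) \<Rightarrow> 'a \<Rightarrow> 'k poly \<Rightarrow> bool" where
  "is_min_poly scale x p \<longleftrightarrow> lead_coeff p = 1 \<and> aeval scale p x = 0 \<and>
     (\<forall>q. q \<noteq> 0 \<and> aeval scale q x = 0 \<longrightarrow> degree p \<le> degree q)"

datatype mtype = LeftT | RightT | PreTwoT | TwoT

definition mathieu_cond :: "mtype \<Rightarrow> 'a::ring_1 set \<Rightarrow> bool" where
  "mathieu_cond \<theta> M \<longleftrightarrow> (\<forall>a. (\<forall>m\<ge>1. a ^ m \<in> M) \<longrightarrow>
     (case \<theta> of
        LeftT \<Rightarrow> (\<forall>b. \<exists>N. \<forall>m\<ge>N. b * a ^ m \<in> M)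
      | RightT \<Rightarrow> (\<forall>b. \<exists>N. \<forall>m\<ge>N. a ^ m * b \<in> M)
      | PreTwoT \<Rightarrow> (\<forall>b. \<exists>N. \<forall>m\<ge>N. b * a ^ m \<in> M) \<and> (\<forall>b. \<exists>N. \<forall>m\<ge>N. a ^ m * b \<in> M)
      | TwoT \<Rightarrow> (\<forall>b c. \<exists>N. \<forall>m\<ge>N. b * a ^ m * c \<in> M)))"

definition mathieu_subspace :: "('k::field \<Rightarrow> 'a::ring_1 \<Rightarrow> 'a) \<Rightarrow> mtype \<Rightarrow> 'a set \<Rightarrow> bool" where
  "mathieu_subspace scale \<theta> M \<longleftrightarrow> module.subspace scale M \<and> mathieu_cond \<theta> M"

definition gen_set :: "mtype \<Rightarrow> 'a::ring_1 \<Rightarrow> 'a set" where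
  "gen_set \<theta> x = (case \<theta> of
      LeftT \<Rightarrow> {b * x | b. True}
    | RightT \<Rightarrow> {x * b | b. True}
    | PreTwoT \<Rightarrow> {x * b + c * x | b c. True}
    | TwoT \<Rightarrow> {y. \<exists>(n::nat) b c. y = (\<Sum>i<n. b i * x * c i)})"

end

theory Submission
  imports Defs
begin

text \<open>
  Write the minimal polynomial as \<open>p = X\<^sup>k (c + X r)\<close> with \<open>c \<noteq> 0\<close>. Then
  \<open>u = -r(a)/c\<close> commutes with \<open>a\<close> and satisfies \<open>a\<^sup>k\<^sup>+\<^sup>1 u = a\<^sup>k\<close>, so
  \<open>e = a\<^sup>k u\<^sup>k\<close> is an idempotent with \<open>e a\<^sup>k = a\<^sup>k = a\<^sup>k e\<close>. Moreover
  \<open>e = (a u)\<^sup>k\<^sup>+\<^sup>1\<close> is a polynomial in \<open>a\<close> without constant term, hence lies in \<open>M\<close>.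
  All powers of the idempotent \<open>e\<close> equal \<open>e\<close>, so the Mathieu condition applied to \<open>e\<close>
  puts \<open>b e\<close>, \<open>e b\<close> or \<open>b e c\<close> into \<open>M\<close>, and \<open>a\<^sup>k\<close> absorbs \<open>e\<close> on both sides.
\<close>

lemma idempotent_power:
  fixes e :: "'a::monoid_mult"
  assumes "e * e = e" and "n > 0"
  shows "e ^ n = e"
  using assms(2)
proof (induction n)
  case (Suc n)
  then show ?case
    using assms(1) by (cases n) (simp_all add: power_Suc)
qed simp

lemma idempotent_from_power_inverse:
  fixes a u :: "'a::monoid_mult"
  assumes commute: "u * a = a * u" and inverse: "a ^ Suc k * u = a ^ k"
  defines "e \<equiv> a ^ k * u ^ k"
  shows "a ^ Suc k * u ^ Suc k = e" and "e * a ^ k = a ^ k" and "a ^ k * e = a ^ k"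
    and "e * e = e"
proof -
  have power_cancel: "a ^ (k + m) * u ^ m = a ^ k" for m
  proof (induction m)
    case (Suc m)
    have "a ^ (k + Suc m) = a ^ m * a ^ Suc k"
      by (metis add.commute add_Suc_right power_add)
    then have "a ^ (k + Suc m) * u ^ Suc m = a ^ m * (a ^ Suc k * u) * u ^ m"
      by (simp add: mult.assoc)
    also have "\<dots> = a ^ (k + m) * u ^ m"
      by (simp only: inverse flip: power_add) (simp add: add.commute)
    finally show ?case
      using Suc by simp
  qed simp
  show "a ^ Suc k * u ^ Suc k = e"
    by (metis e_def inverse mult.assoc power_Suc)
  have "u ^ k * a ^ k = a ^ k * u ^ k"
    by (metis commute power_commuting_commutes)
  then show absorb_right: "e * a ^ k = a ^ k"
    using power_cancel[of k] by (simp add: e_def mult.assoc power_add)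
  show "a ^ k * e = a ^ k"
    using power_cancel[of k] by (simp add: e_def power_add mult.assoc)
  show "e * e = e"
    by (metis absorb_right e_def mult.assoc)
qed

lemma eventually_power_idempotent:
  fixes e :: "'a::monoid_mult"
  assumes "e * e = e" and "\<exists>N. \<forall>m\<ge>N. P (e ^ m)"
  shows "P e"
proof -
  obtain N where "\<forall>m\<ge>N. P (e ^ m)"
    using assms(2) by blast
  then have "P (e ^ Suc N)"
    by (simp del: power_Suc)
  then show ?thesis
    using idempotent_power[OF assms(1), of "Suc N"] by (simp del: power_Suc)
qed

lemma mathieu_cond_idempotent:
  fixes e :: "'a::ring_1"
  assumes "mathieu_cond \<theta> M" and "e * e = e" and "e \<in> M"
  shows "case \<theta> of
      LeftT \<Rightarrow> \<forall>b. b * e \<in> M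
    | RightT \<Rightarrow> \<forall>b. e * b \<in> M
    | PreTwoT \<Rightarrow> (\<forall>b. b * e \<in> M) \<and> (\<forall>b. e * b \<in> M)
    | TwoT \<Rightarrow> \<forall>b c. b * e * c \<in> M"
proof -
  have "\<forall>m\<ge>1. e ^ m \<in> M"
    using assms(3) by (auto simp: idempotent_power[OF assms(2)])
  then have "case \<theta> of
      LeftT \<Rightarrow> \<forall>b. \<exists>N. \<forall>m\<ge>N. b * e ^ m \<in> M
    | RightT \<Rightarrow> \<forall>b. \<exists>N. \<forall>m\<ge>N. e ^ m * b \<in> M
    | PreTwoT \<Rightarrow> (\<forall>b. \<exists>N. \<forall>m\<ge>N. b * e ^ m \<in> M) \<and> (\<forall>b. \<exists>N. \<forall>m\<ge>N. e ^ m * b \<in> M)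
    | TwoT \<Rightarrow> \<forall>b c. \<exists>N. \<forall>m\<ge>N. b * e ^ m * c \<in> M"
    using assms(1) unfolding mathieu_cond_def by blast
  moreover have "b * e \<in> M" if "\<exists>N. \<forall>m\<ge>N. b * e ^ m \<in> M" for b
    using eventually_power_idempotent[OF assms(2) that] .
  moreover have "e * b \<in> M" if "\<exists>N. \<forall>m\<ge>N. e ^ m * b \<in> M" for b
    using eventually_power_idempotent[OF assms(2) that] .
  moreover have "b * e * c \<in> M" if "\<exists>N. \<forall>m\<ge>N. b * e ^ m * c \<in> M" for b c
    using eventually_power_idempotent[OF assms(2) that] .
  ultimately show ?thesis
    by (cases \<theta>) auto
qed

locale scalar_algebra = vector_space scale for scale :: "'k::field \<Rightarrow> 'a::ring_1 \<Rightarrow> 'a" +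
  assumes scale_mult_left: "scale c (x * y) = scale c x * y"
    and scale_mult_right: "scale c (x * y) = x * scale c y"

lemma scalar_algebra_iff_K_algebra: "scalar_algebra scale \<longleftrightarrow> K_algebra scale"
  unfolding K_algebra_def scalar_algebra_def scalar_algebra_axioms_def by blast

context scalar_algebra
begin

lemma gen_set_subset_if_idempotent:
  assumes "subspace M" and "mathieu_cond \<theta> M"
    and "e * e = e" and "e \<in> M" and right: "x * e = x" and left: "e * x = x"
  shows "gen_set \<theta> x \<subseteq> M"
proof -
  note absorb = mathieu_cond_idempotent[OF assms(2-4)]
  have left_multiple: "b * x \<in> M" if "\<forall>c. c * e \<in> M" for b
    using that[rule_format, of "b * x"] by (simp add: right mult.assoc)
  have right_multiple: "x * b \<in> M" if "\<forall>c. e * c \<in> M" for b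
    using that[rule_format, of "x * b"] by (simp add: left flip: mult.assoc)
  show ?thesis
  proof (cases \<theta>)
    case LeftT
    then show ?thesis
      using absorb left_multiple by (auto simp: gen_set_def)
  next
    case RightT
    then show ?thesis
      using absorb right_multiple by (auto simp: gen_set_def)
  next
    case PreTwoT
    then show ?thesis
      using absorb left_multiple right_multiple subspace_add[OF assms(1)] by (auto simp: gen_set_def)
  next
    case TwoT
    have "b * x * c = b * e * (x * c)" for b c
      by (metis left mult.assoc)
    then have "b * x * c \<in> M" for b c
      using absorb TwoT by simp
    then show ?thesis
      using TwoT by (auto simp: gen_set_def intro!: subspace_sum[OF assms(1)])
  qed
qed

lemma scale_eq_scale_one_mult: "scale c x = scale c 1 * x"
  by (metis scale_mult_left mult_1_left)

lemma aeval_eq_sum_atMost: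
  assumes "degree p \<le> n"
  shows "aeval scale p x = (\<Sum>i\<le>n. scale (coeff p i) (x ^ i))"
  unfolding aeval_def
  by (rule sum.mono_neutral_left) (use assms in \<open>auto simp: coeff_eq_0 not_le\<close>)

lemma aeval_0 [simp]: "aeval scale 0 x = 0"
  by (simp add: aeval_def)

lemma aeval_1 [simp]: "aeval scale 1 x = 1"
  by (simp add: aeval_def)

lemma aeval_add: "aeval scale (p + q) x = aeval scale p x + aeval scale q x"
proof -
  let ?n = "max (degree p) (degree q)"
  have "aeval scale (p + q) x = (\<Sum>i\<le>?n. scale (coeff (p + q) i) (x ^ i))"
    by (rule aeval_eq_sum_atMost) (meson degree_add_le max.cobounded1 max.cobounded2)
  also have "\<dots> = (\<Sum>i\<le>?n. scale (coeff p i) (x ^ i)) + (\<Sum>i\<le>?n. scale (coeff q i) (x ^ i))"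
    by (simp add: scale_left_distrib sum.distrib)
  also have "\<dots> = aeval scale p x + aeval scale q x"
    using aeval_eq_sum_atMost[of p ?n x] aeval_eq_sum_atMost[of q ?n x] by simp
  finally show ?thesis .
qed

lemma aeval_smult: "aeval scale (smult c p) x = scale c (aeval scale p x)"
proof -
  have "aeval scale (smult c p) x = (\<Sum>i\<le>degree p. scale (coeff (smult c p) i) (x ^ i))"
    by (rule aeval_eq_sum_atMost) (simp add: degree_smult_le)
  also have "\<dots> = scale c (aeval scale p x)"
    by (simp add: aeval_def scale_sum_right)
  finally show ?thesis .
qed

lemma aeval_pCons: "aeval scale (pCons c p) x = scale c 1 + x * aeval scale p x"
proof -
  have "aeval scale (pCons c p) x = (\<Sum>i\<le>Suc (degree p). scale (coeff (pCons c p) i) (x ^ i))"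
    by (rule aeval_eq_sum_atMost) (simp add: degree_pCons_le)
  also have "\<dots> = scale c 1 + (\<Sum>i\<le>degree p. scale (coeff p i) (x * x ^ i))"
    by (simp only: sum.atMost_Suc_shift) simp
  also have "\<dots> = scale c 1 + x * aeval scale p x"
    by (simp add: aeval_def sum_distrib_left scale_mult_right)
  finally show ?thesis .
qed

lemma aeval_X [simp]: "aeval scale [:0, 1:] x = x"
  by (simp add: aeval_pCons)

lemma aeval_mult: "aeval scale (p * q) x = aeval scale p x * aeval scale q x"
proof (induction p rule: pCons_induct)
  case (pCons c p)
  have "aeval scale (pCons c p * q) x = scale c (aeval scale q x) + x * aeval scale (p * q) x"
    by (simp add: aeval_add aeval_smult aeval_pCons)
  also have "\<dots> = (scale c 1 + x * aeval scale p x) * aeval scale q x"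
    using pCons.IH by (simp add: distrib_right mult.assoc scale_eq_scale_one_mult[of c "aeval scale q x"])
  finally show ?case
    by (simp add: aeval_pCons)
qed simp

lemma aeval_power: "aeval scale (p ^ n) x = aeval scale p x ^ n"
  by (induction n) (simp_all add: aeval_mult)

lemma aeval_commute: "aeval scale p x * aeval scale q x = aeval scale q x * aeval scale p x"
  by (metis aeval_mult mult.commute)

lemma aeval_in_subspace:
  assumes "subspace M" and "\<forall>m\<ge>1. a ^ m \<in> M" and "coeff f 0 = 0"
  shows "aeval scale f a \<in> M"
  unfolding aeval_def
proof (rule subspace_sum[OF assms(1)])
  fix i
  show "scale (coeff f i) (a ^ i) \<in> M"
    using assms subspace_0 subspace_scale by (cases "i = 0") simp_all
qed

lemma power_order_0_inverse:
  assumes "p \<noteq> 0" and "aeval scale p a = 0"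
  obtains U where "a ^ Suc (order 0 p) * aeval scale U a = a ^ order 0 p"
proof -
  define k where "k = order 0 p"
  obtain q where p_eq: "p = [:0, 1:] ^ k * q" and not_dvd: "\<not> [:0, 1:] dvd q"
    using order_decomp[OF assms(1), of 0] by (auto simp: k_def)
  obtain c r where q_eq: "q = pCons c r"
    by (cases q)
  have "poly q 0 \<noteq> 0"
    using not_dvd poly_eq_0_iff_dvd[of q 0] by simp
  then have "c \<noteq> 0"
    by (simp add: q_eq)
  define R where "R = aeval scale r a"
  have "aeval scale p a = a ^ k * (scale c 1 + a * R)"
    by (simp only: p_eq q_eq aeval_mult aeval_power aeval_X aeval_pCons[of c r] R_def)
  then have "a ^ k * (scale c 1 + a * R) = 0"
    using assms(2) by simp
  then have "scale c (a ^ k) + a ^ Suc k * R = 0"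
    by (simp add: distrib_left flip: mult.assoc power_Suc2 scale_mult_right)
  then have R_eq: "a ^ Suc k * R = - scale c (a ^ k)"
    by (metis add.commute add_eq_0_iff2)
  have "a ^ Suc k * aeval scale (smult (- 1 / c) r) a = scale (- 1 / c) (a ^ Suc k * R)"
    by (simp only: aeval_smult R_def scale_mult_right)
  also have "\<dots> = a ^ k"
    using \<open>c \<noteq> 0\<close> by (simp only: R_eq) (simp add: scale_scale)
  finally show ?thesis
    using that k_def by blast
qed

end

theorem theorem3p9:
  fixes scale :: "'k::field \<Rightarrow> 'a::ring_1 \<Rightarrow> 'a"
    and \<theta> :: mtype and M :: "'a set" and a :: 'a and p :: "'k poly" and k :: nat
  assumes "K_algebra scale"
    and "mathieu_subspace scale \<theta> M"
    and "algebraic_el scale a"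
    and "\<forall>m\<ge>1. a ^ m \<in> M"
    and "is_min_poly scale a p"
    and "k = order 0 p"
  shows "gen_set \<theta> (a ^ k) \<subseteq> M"
proof -
  interpret scalar_algebra scale
    using assms(1) scalar_algebra_iff_K_algebra by blast
  have "p \<noteq> 0" and "aeval scale p a = 0"
    using assms(5) by (auto simp: is_min_poly_def)
  then obtain U where inverse: "a ^ Suc k * aeval scale U a = a ^ k"
    using assms(6) power_order_0_inverse by blast
  define u where "u = aeval scale U a"
  have commute: "u * a = a * u"
    using aeval_commute[of U a "[:0, 1:]"] by (simp add: u_def)
  note idempotent = idempotent_from_power_inverse[OF commute inverse[folded u_def]]
  have "aeval scale ([:0, 1:] ^ Suc k * U ^ Suc k) a \<in> M"
    using assms(2,4) by (intro aeval_in_subspace) (simp_all add: mathieu_subspace_def coeff_mult_0)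
  then have "a ^ k * u ^ k \<in> M"
    by (simp only: aeval_mult aeval_power aeval_X u_def[symmetric] idempotent(1))
  then show ?thesis
    using gen_set_subset_if_idempotent idempotent(2-4) assms(2)
    unfolding mathieu_subspace_def by blast
qed

end
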